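(* Let $\Delta$ be a $2$-connected simplicial graph of genus $g\ge 4$ in which every vertex has valency at least $3$. Then the girth of $\Delta$ is at most $\left\lfloor\frac{g+3}{2}\right\rfloor$, except for at most three graphs (up to isomorphism).
   Context: A simplicial graph is a finite $1$-dimensional simplicial complex (a finite simple graph); it is $2$-connected if it is connected, has at least $3$ vertices, and remains connected after deleting any vertex. The genus is $g=1-v+e$ where $v$, $e$ are the numbers of vertices and edges. The girth is the length of a shortest cycle. *)

theory Defs
  imports Main
begin

definition simple_graph :: "'a set \<Rightarrow> 'a set set \<Rightarrow> bool" where
  "simple_graph V E \<longleftrightarrow> finite V \<and>
     (\<forall>e\<in>E. \<exists>u v. e = {u, v} \<and> u \<in> V \<and> v \<in> V \<and> u \<noteq> v)"

definition adj_rel :: "'a set \<Rightarrow> 'a set set \<Rightarrow> ('a \<times> 'a) set" where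
  "adj_rel V E = {(x, y). x \<in> V \<and> y \<in> V \<and> {x, y} \<in> E}"

definition connected_graph :: "'a set \<Rightarrow> 'a set set \<Rightarrow> bool" where
  "connected_graph V E \<longleftrightarrow> V \<noteq> {} \<and> (\<forall>u\<in>V. \<forall>v\<in>V. (u, v) \<in> (adj_rel V E)\<^sup>*)"

definition delete_vertex :: "'a set \<Rightarrow> 'a set set \<Rightarrow> 'a \<Rightarrow> 'a set \<times> 'a set set" where
  "delete_vertex V E w = (V - {w}, {e \<in> E. w \<notin> e})"

definition two_connected :: "'a set \<Rightarrow> 'a set set \<Rightarrow> bool" where
  "two_connected V E \<longleftrightarrow> connected_graph V E \<and> card V \<ge> 3 \<and>
     (\<forall>w\<in>V. connected_graph (fst (delete_vertex V E w)) (snd (delete_vertex V E w)))"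

definition degree :: "'a set \<Rightarrow> 'a set set \<Rightarrow> 'a \<Rightarrow> nat" where
  "degree V E u = card {v \<in> V. {u, v} \<in> E}"

definition genus :: "'a set \<Rightarrow> 'a set set \<Rightarrow> int" where
  "genus V E = 1 - int (card V) + int (card E)"

definition is_cycle :: "'a set \<Rightarrow> 'a set set \<Rightarrow> 'a list \<Rightarrow> bool" where
  "is_cycle V E cs \<longleftrightarrow> length cs \<ge> 3 \<and> distinct cs \<and> set cs \<subseteq> V \<and>
     (\<forall>i < length cs. {cs ! i, cs ! ((i + 1) mod length cs)} \<in> E)"

definition girth :: "'a set \<Rightarrow> 'a set set \<Rightarrow> nat" where
  "girth V E = (LEAST k. \<exists>cs. is_cycle V E cs \<and> length cs = k)"

definition graph_iso :: "'a set \<Rightarrow> 'a set set \<Rightarrow> 'b set \<Rightarrow> 'b set set \<Rightarrow> bool" where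
  "graph_iso V1 E1 V2 E2 \<longleftrightarrow> (\<exists>f. bij_betw f V1 V2 \<and>
     (\<forall>u\<in>V1. \<forall>v\<in>V1. {u, v} \<in> E1 \<longleftrightarrow> {f u, f v} \<in> E2))"

end

theory Submission
  imports Defs
begin

text \<open>
  Let k be the girth. Non-backtracking walks of length at most (k - 1) div 2 that end at a fixed
  vertex (for even k: at either end of a fixed edge) start at pairwise distinct vertices, which
  gives the Moore bounds v \<ge> 3 * 2^R - 2 for k = 2R + 1 and v \<ge> 2^(R+2) - 2 for k = 2R + 2.
  Minimum degree 3 gives 3v \<le> 2e, that is g \<ge> v/2 + 1. Together these force
  k \<le> (g + 3) div 2 unless both estimates are equalities, which happens only for cubic graphs of
  girth 4, 5 and 6 on 6, 10 and 14 vertices; a breadth-first search from a vertex or an edge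
  identifies them as K_{3,3}, the Petersen graph and the Heawood graph.
\<close>

fun non_backtracking :: "'a set set \<Rightarrow> 'a list \<Rightarrow> bool" where
  "non_backtracking E [] = True"
| "non_backtracking E [a] = True"
| "non_backtracking E [a, b] = ({a, b} \<in> E)"
| "non_backtracking E (a # b # c # p) = ({a, b} \<in> E \<and> a \<noteq> c \<and> non_backtracking E (b # c # p))"

lemma non_backtracking_Cons:
  "non_backtracking E (a # p) \<longleftrightarrow>
     non_backtracking E p \<and> (p \<noteq> [] \<longrightarrow> {a, p ! 0} \<in> E) \<and> (Suc 0 < length p \<longrightarrow> a \<noteq> p ! 1)"
  by (cases p; cases "tl p") auto

lemma non_backtracking_iff_nth:
  "non_backtracking E p \<longleftrightarrow>
     (\<forall>i. Suc i < length p \<longrightarrow> {p ! i, p ! Suc i} \<in> E) \<and>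
     (\<forall>i. Suc (Suc i) < length p \<longrightarrow> p ! Suc (Suc i) \<noteq> p ! i)"
  (is "_ \<longleftrightarrow> ?edges p \<and> ?turns p")
proof (induction p)
  case (Cons a p)
  have "?edges (a # p) \<longleftrightarrow> ?edges p \<and> (p \<noteq> [] \<longrightarrow> {a, p ! 0} \<in> E)"
    by (auto simp: nth_Cons split: nat.splits)
  moreover have "?turns (a # p) \<longleftrightarrow> ?turns p \<and> (Suc 0 < length p \<longrightarrow> a \<noteq> p ! 1)"
    by (auto simp: nth_Cons split: nat.splits)
  ultimately show ?case
    using Cons.IH by (auto simp: non_backtracking_Cons)
qed simp

lemma non_backtracking_take: "non_backtracking E p \<Longrightarrow> non_backtracking E (take n p)"
  by (simp add: non_backtracking_iff_nth)

lemma non_backtracking_rev: "non_backtracking E (rev p) \<longleftrightarrow> non_backtracking E p"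
proof -
  have "non_backtracking E (rev p)" if "non_backtracking E p" for p :: "'a list"
    unfolding non_backtracking_iff_nth
  proof (intro conjI allI impI)
    fix i assume i: "Suc i < length (rev p)"
    then have "{p ! (length p - Suc (Suc i)), p ! Suc (length p - Suc (Suc i))} \<in> E"
      using that by (simp add: non_backtracking_iff_nth)
    with i show "{rev p ! i, rev p ! Suc i} \<in> E"
      by (simp add: rev_nth Suc_diff_Suc insert_commute)
  next
    fix i assume i: "Suc (Suc i) < length (rev p)"
    then have "p ! Suc (Suc (length p - Suc (Suc (Suc i)))) \<noteq> p ! (length p - Suc (Suc (Suc i)))"
      using that by (simp add: non_backtracking_iff_nth)
    with i show "rev p ! Suc (Suc i) \<noteq> rev p ! i"
      by (simp add: rev_nth Suc_diff_Suc)
  qed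
  from this[of p] this[of "rev p"] show ?thesis by auto
qed

lemma non_backtracking_append:
  "non_backtracking E (xs @ [a, b]) \<Longrightarrow> non_backtracking E (a # b # ys) \<Longrightarrow>
     non_backtracking E (xs @ a # b # ys)"
proof (induction xs)
  case (Cons z xs)
  then show ?case
    by (cases xs; cases "tl xs") (auto simp: non_backtracking_Cons)
qed simp

lemma non_backtracking_join:
  assumes "non_backtracking E (u # q)" "non_backtracking E (u # p)" "q \<noteq> []" "p \<noteq> []"
    and "hd q \<noteq> hd p"
  shows "non_backtracking E (rev q @ u # p)"
proof -
  obtain a q' where q: "q = a # q'" using assms(3) by (cases q) auto
  obtain b p' where p: "p = b # p'" using assms(4) by (cases p) auto
  have "non_backtracking E (rev q' @ [a, u])"
    using assms(1) non_backtracking_rev[of E "u # a # q'"] q by simp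
  moreover have "non_backtracking E [a, u, b]"
    using assms q p by (auto simp: non_backtracking_Cons insert_commute)
  ultimately have "non_backtracking E ((rev q' @ [a]) @ [u, b])"
    using non_backtracking_append[of E "rev q'" a u "[b]"] by simp
  then have "non_backtracking E ((rev q' @ [a]) @ u # b # p')"
    using non_backtracking_append[of E "rev q' @ [a]" u b p'] assms(2) p by simp
  then show ?thesis using q p by simp
qed

lemma non_backtracking_snoc:
  assumes "non_backtracking E p" "p \<noteq> []" "{last p, y} \<in> E"
    and "Suc 0 < length p \<Longrightarrow> p ! (length p - 2) \<noteq> y"
  shows "non_backtracking E (p @ [y])"
proof -
  have "rev p ! 0 = last p" using assms(2) by (simp add: hd_rev[symmetric] hd_conv_nth)
  moreover have "rev p ! 1 = p ! (length p - 2)" if "Suc 0 < length p"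
    using that by (simp add: rev_nth numeral_2_eq_2)
  ultimately have "non_backtracking E (y # rev p)"
    using assms by (auto simp: non_backtracking_Cons non_backtracking_rev insert_commute)
  then show ?thesis using non_backtracking_rev[of E "p @ [y]"] by simp
qed

lemma simple_graph_edgeD:
  "simple_graph V E \<Longrightarrow> {u, w} \<in> E \<Longrightarrow> u \<in> V \<and> w \<in> V \<and> u \<noteq> w"
  unfolding simple_graph_def by (metis doubleton_eq_iff)

lemma simple_graph_edgeE:
  assumes "simple_graph V E" "e \<in> E"
  obtains u v where "e = {u, v}" "u \<in> V" "v \<in> V" "u \<noteq> v"
  using assms unfolding simple_graph_def by blast

lemma non_backtracking_set_subset:
  assumes "simple_graph V E" "non_backtracking E p" "Suc 0 < length p"
  shows "set p \<subseteq> V"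
proof
  have edge: "{p ! i, p ! Suc i} \<in> E" if "Suc i < length p" for i
    using assms(2) that unfolding non_backtracking_iff_nth by blast
  fix v assume "v \<in> set p"
  then obtain i where i: "i < length p" "v = p ! i" by (auto simp: in_set_conv_nth)
  show "v \<in> V"
  proof (cases "Suc i < length p")
    case True
    then show ?thesis using i edge simple_graph_edgeD[OF assms(1)] by blast
  next
    case False
    then have "i = Suc (i - 1)" "Suc (i - 1) < length p" using i assms(3) by auto
    then have "{p ! (i - 1), p ! i} \<in> E" using edge by metis
    then show ?thesis using i simple_graph_edgeD[OF assms(1)] by blast
  qed
qed

lemma is_cycle_of_closed_walk:
  assumes sg: "simple_graph V E" and nb: "non_backtracking E (a # ys @ [a])"
    and dist: "distinct (a # ys)"
  shows "is_cycle V E (a # ys)"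
proof -
  let ?w = "a # ys @ [a]" and ?n = "length (a # ys)"
  have edge: "{?w ! i, ?w ! Suc i} \<in> E" if "i < ?n" for i
  proof -
    have "\<forall>i. Suc i < length ?w \<longrightarrow> {?w ! i, ?w ! Suc i} \<in> E"
      using nb unfolding non_backtracking_iff_nth by blast
    then show ?thesis using that by simp
  qed
  have w_nth: "?w ! i = (a # ys) ! i" if "i < ?n" for i
    using that by (metis append_Cons nth_append)
  have w_nth_Suc: "?w ! Suc i = (a # ys) ! (Suc i mod ?n)" if "i < ?n" for i
  proof (cases "i < length ys")
    case True
    then show ?thesis by (simp add: nth_append)
  next
    case False
    then have "i = length ys" using that by simp
    then show ?thesis by simp
  qed
  have "3 \<le> ?n"
  proof (cases ys)
    case Nil
    then show ?thesis using edge[of 0] simple_graph_edgeD[OF sg, of a a] by simp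
  next
    case (Cons b zs)
    then show ?thesis using nb by (cases zs) auto
  qed
  moreover have "set (a # ys) \<subseteq> V"
    using non_backtracking_set_subset[OF sg nb] by auto
  moreover have "{(a # ys) ! i, (a # ys) ! ((i + 1) mod ?n)} \<in> E" if "i < ?n" for i
    using edge[OF that] unfolding w_nth[OF that] w_nth_Suc[OF that] by simp
  ultimately show ?thesis
    using dist unfolding is_cycle_def by blast
qed

lemma shorter_cycle_if_not_distinct:
  assumes sg: "simple_graph V E"
  shows "non_backtracking E p \<Longrightarrow> \<not> distinct p \<Longrightarrow> \<exists>cs. is_cycle V E cs \<and> length cs < length p"
proof (induction p)
  case (Cons a p)
  show ?case
  proof (cases "distinct p")
    case False
    with Cons show ?thesis
      by (auto simp: non_backtracking_Cons less_Suc_eq)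
  next
    case True
    with Cons.prems obtain ys zs where p: "p = ys @ a # zs" by (auto dest: split_list)
    have "non_backtracking E (take (length ys + 2) (a # p))"
      using Cons.prems(1) by (rule non_backtracking_take)
    then have "non_backtracking E (a # ys @ [a])" using p by simp
    moreover have "distinct (a # ys)" using True p by auto
    ultimately have "is_cycle V E (a # ys)" by (rule is_cycle_of_closed_walk[OF sg])
    then show ?thesis using p by auto
  qed
qed simp

definition girth_exceeds :: "'a set \<Rightarrow> 'a set set \<Rightarrow> nat \<Rightarrow> bool" where
  "girth_exceeds V E L \<longleftrightarrow> (\<forall>cs. is_cycle V E cs \<longrightarrow> L < length cs)"

lemma short_walk_distinct:
  assumes "simple_graph V E" "girth_exceeds V E L" "non_backtracking E w" "length w \<le> L + 1"
  shows "distinct w"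
  using shorter_cycle_if_not_distinct[OF assms(1,3)] assms(2,4) unfolding girth_exceeds_def
  by fastforce

text \<open>At the first vertex where the two walks branch, their remainders join into a
  non-backtracking walk with a repeated vertex, which is too short to exist.\<close>
lemma short_walks_unique:
  assumes sg: "simple_graph V E" and girth: "girth_exceeds V E L"
  shows "non_backtracking E p \<Longrightarrow> non_backtracking E q \<Longrightarrow> p \<noteq> [] \<Longrightarrow> q \<noteq> [] \<Longrightarrow>
    hd p = hd q \<Longrightarrow> last p = last q \<Longrightarrow> length p + length q \<le> L + 2 \<Longrightarrow> p = q"
proof (induction p arbitrary: q)
  case (Cons u p)
  note distinct = short_walk_distinct[OF sg girth]
  obtain q' where q: "q = u # q'" using Cons.prems by (cases q) auto
  consider "p = []" | "q' = []" | "p \<noteq> []" "q' \<noteq> []" "hd p = hd q'" | "p \<noteq> []" "q' \<noteq> []" "hd p \<noteq> hd q'"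
    by blast
  then show ?case
  proof cases
    case 1
    have "distinct q" using distinct[of q] Cons.prems 1 by simp
    moreover have "last q = u" using Cons.prems 1 by simp
    ultimately have "q' = []" using q by (metis distinct.simps(2) last.simps last_in_set)
    with 1 q show ?thesis by simp
  next
    case 2
    have "distinct (u # p)" using distinct[of "u # p"] Cons.prems q 2 by simp
    moreover have "last (u # p) = u" using Cons.prems q 2 by simp
    ultimately have "p = []" by (metis distinct.simps(2) last.simps last_in_set)
    with 2 q show ?thesis by simp
  next
    case 3
    have "non_backtracking E p" "non_backtracking E q'"
      using Cons.prems(1,2) q by (simp_all add: non_backtracking_Cons)
    then have "p = q'"
      using Cons.IH[of q'] Cons.prems(6,7) q 3 by simp
    then show ?thesis using q by simp
  next
    case 4
    let ?w = "rev q' @ u # p"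
    have "non_backtracking E ?w"
      using non_backtracking_join[of E u q' p] Cons.prems q 4 by simp
    moreover have "last p = last q'" using Cons.prems q 4 by simp
    then have "last p \<in> set (rev q')" using 4 by (metis last_in_set set_rev)
    moreover have "last p \<in> set p" using 4 by (metis last_in_set)
    ultimately show ?thesis
      using distinct[of ?w] Cons.prems q by auto
  qed
qed simp

lemma mult_add_le_mult_add:
  fixes a c k :: nat
  assumes "a \<le> c" "1 \<le> k"
  shows "a * k + c \<le> c * k + a"
proof -
  obtain d where "c = a + d" using assms(1) le_Suc_ex by blast
  moreover have "d \<le> d * k" using assms(2) by simp
  ultimately show ?thesis by (simp add: algebra_simps)
qed

definition neighbours :: "'a set \<Rightarrow> 'a set set \<Rightarrow> 'a \<Rightarrow> 'a set" where
  "neighbours V E u = {w \<in> V. {u, w} \<in> E}"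

text \<open>Non-backtracking walks with n edges ending at x, listed from their far end back to x,
  whose first edge leaving x does not lead into B.\<close>
definition nb_walks :: "'a set set \<Rightarrow> 'a \<Rightarrow> 'a set \<Rightarrow> nat \<Rightarrow> 'a list set" where
  "nb_walks E x B n =
     {p. non_backtracking E p \<and> length p = Suc n \<and> last p = x \<and> (0 < n \<longrightarrow> p ! (n - 1) \<notin> B)}"

definition nb_walks_upto :: "'a set set \<Rightarrow> 'a \<Rightarrow> 'a set \<Rightarrow> nat \<Rightarrow> 'a list set" where
  "nb_walks_upto E x B R = (\<Union>n\<le>R. nb_walks E x B n)"

lemma nb_walks_0: "nb_walks E x B 0 = {[x]}"
  by (auto simp: nb_walks_def length_Suc_conv)

lemma nb_walks_uptoD:
  "p \<in> nb_walks_upto E x B R \<Longrightarrow>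
     non_backtracking E p \<and> p \<noteq> [] \<and> last p = x \<and> length p \<le> Suc R"
  by (auto simp: nb_walks_upto_def nb_walks_def)

lemma inj_on_hd_nb_walks_upto:
  assumes "simple_graph V E" "girth_exceeds V E L" "2 * R \<le> L"
  shows "inj_on hd (nb_walks_upto E x B R)"
proof
  fix p q assume "p \<in> nb_walks_upto E x B R" "q \<in> nb_walks_upto E x B R" "hd p = hd q"
  then show "p = q"
    using nb_walks_uptoD[of p E x B R] nb_walks_uptoD[of q E x B R] assms(3)
    by (intro short_walks_unique[OF assms(1,2)]) auto
qed

locale min_degree_3_graph =
  fixes V :: "'a set" and E :: "'a set set"
  assumes simple: "simple_graph V E"
    and degree_ge_3: "\<forall>u\<in>V. 3 \<le> degree V E u"
begin

lemma finite_V: "finite V"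
  using simple by (simp add: simple_graph_def)

lemma finite_neighbours: "finite (neighbours V E u)"
  using finite_V by (simp add: neighbours_def)

lemma card_neighbours_ge_3: "u \<in> V \<Longrightarrow> 3 \<le> card (neighbours V E u)"
  using degree_ge_3 by (simp add: neighbours_def degree_def)

lemma nb_walks_subset:
  assumes "x \<in> V" "p \<in> nb_walks E x B n"
  shows "set p \<subseteq> V"
proof (cases n)
  case 0
  then show ?thesis using assms by (simp add: nb_walks_0)
next
  case (Suc m)
  then show ?thesis
    using non_backtracking_set_subset[OF simple, of p] assms(2) by (simp add: nb_walks_def)
qed

lemma finite_nb_walks: "x \<in> V \<Longrightarrow> finite (nb_walks E x B n)"
proof -
  assume "x \<in> V"
  then have "nb_walks E x B n \<subseteq> {p. set p \<subseteq> V \<and> length p = Suc n}"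
    using nb_walks_subset by (auto simp: nb_walks_def)
  then show ?thesis
    using finite_lists_length_eq[OF finite_V] by (rule finite_subset)
qed

lemma nb_walks_1: "nb_walks E x B (Suc 0) = (\<lambda>z. [z, x]) ` (neighbours V E x - B)"
  using simple_graph_edgeD[OF simple]
  by (fastforce simp: nb_walks_def neighbours_def length_Suc_conv insert_commute)

text \<open>Since every degree is at least 3, a walk extends at its far end in at least two
  non-backtracking ways.\<close>
lemma card_nb_walks_Suc:
  assumes x: "x \<in> V"
  shows "2 * card (nb_walks E x B (Suc n)) \<le> card (nb_walks E x B (Suc (Suc n)))"
proof -
  let ?W = "nb_walks E x B (Suc n)"
  define ext where "ext p = (\<lambda>z. z # p) ` (neighbours V E (hd p) - {p ! 1})" for p
  have ext_sub: "(\<Union>p\<in>?W. ext p) \<subseteq> nb_walks E x B (Suc (Suc n))"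
  proof
    fix w assume "w \<in> (\<Union>p\<in>?W. ext p)"
    then obtain p z where p: "p \<in> ?W" and z: "z \<in> neighbours V E (hd p)" "z \<noteq> p ! 1"
      and w: "w = z # p"
      unfolding ext_def by blast
    obtain a b r where "p = a # b # r"
      using p by (auto simp: nb_walks_def length_Suc_conv)
    then show "w \<in> nb_walks E x B (Suc (Suc n))"
      using p z w by (auto simp: nb_walks_def neighbours_def insert_commute)
  qed
  have card_ext: "2 \<le> card (ext p)" if "p \<in> ?W" for p
  proof -
    have "p \<noteq> []" using that by (auto simp: nb_walks_def)
    then have "hd p \<in> V" using nb_walks_subset[OF x that] hd_in_set by blast
    then have "3 \<le> card (neighbours V E (hd p))" by (rule card_neighbours_ge_3)
    then have "2 \<le> card (neighbours V E (hd p) - {p ! 1})"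
      using card_Diff_singleton_if[of "neighbours V E (hd p)" "p ! 1"] by (auto split: if_splits)
    then show ?thesis
      unfolding ext_def by (subst card_image) (auto simp: inj_on_def)
  qed
  have "2 * card ?W = (\<Sum>p\<in>?W. 2)" by simp
  also have "\<dots> \<le> (\<Sum>p\<in>?W. card (ext p))" by (rule sum_mono) (rule card_ext)
  also have "\<dots> = card (\<Union>p\<in>?W. ext p)"
    by (rule card_UN_disjoint[symmetric])
      (auto simp: ext_def finite_nb_walks[OF x] finite_neighbours)
  also have "\<dots> \<le> card (nb_walks E x B (Suc (Suc n)))"
    by (rule card_mono[OF finite_nb_walks[OF x] ext_sub])
  finally show ?thesis .
qed

lemma card_nb_walks_ge:
  assumes x: "x \<in> V"
  shows "card (neighbours V E x - B) * 2 ^ m \<le> card (nb_walks E x B (Suc m))"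
proof (induction m)
  case 0
  have "inj (\<lambda>z. [z, x])" by (auto simp: inj_def)
  then show ?case by (simp add: nb_walks_1 card_image inj_on_def)
next
  case (Suc m)
  then show ?case using card_nb_walks_Suc[OF x, of B m] by simp
qed

lemma card_nb_walks_upto_ge:
  assumes x: "x \<in> V"
  shows "card (neighbours V E x - B) * 2 ^ R + 1 \<le>
    card (nb_walks_upto E x B R) + card (neighbours V E x - B)"
proof (induction R)
  case 0
  then show ?case by (simp add: nb_walks_upto_def nb_walks_0)
next
  case (Suc R)
  have "nb_walks_upto E x B (Suc R) = nb_walks E x B (Suc R) \<union> nb_walks_upto E x B R"
    by (simp add: nb_walks_upto_def atMost_Suc)
  moreover have "nb_walks E x B (Suc R) \<inter> nb_walks_upto E x B R = {}"
    by (auto simp: nb_walks_upto_def nb_walks_def)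
  moreover have "finite (nb_walks_upto E x B R)"
    using finite_nb_walks[OF x] by (simp add: nb_walks_upto_def)
  ultimately have "card (nb_walks_upto E x B (Suc R)) =
      card (nb_walks_upto E x B R) + card (nb_walks E x B (Suc R))"
    using card_Un_disjoint finite_nb_walks[OF x] by (metis add.commute)
  moreover have "card (neighbours V E x - B) * 2 ^ Suc R =
      card (neighbours V E x - B) * 2 ^ R + card (neighbours V E x - B) * 2 ^ R"
    by simp
  ultimately show ?case
    using Suc card_nb_walks_ge[OF x, of B R] by linarith
qed

lemma hd_nb_walks_upto_subset:
  assumes "x \<in> V"
  shows "hd ` nb_walks_upto E x B R \<subseteq> V"
proof
  fix v assume "v \<in> hd ` nb_walks_upto E x B R"
  then obtain p n where p: "p \<in> nb_walks E x B n" and v: "v = hd p"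
    by (auto simp: nb_walks_upto_def)
  have "p \<noteq> []" using p by (auto simp: nb_walks_def)
  then show "v \<in> V" using nb_walks_subset[OF assms p] v hd_in_set by blast
qed

lemma card_nb_walks_upto_le:
  assumes "x \<in> V" "girth_exceeds V E L" "2 * R \<le> L"
  shows "card (nb_walks_upto E x B R) \<le> card V"
proof -
  have "card (hd ` nb_walks_upto E x B R) = card (nb_walks_upto E x B R)"
    by (rule card_image[OF inj_on_hd_nb_walks_upto[OF simple assms(2,3)]])
  moreover have "card (hd ` nb_walks_upto E x B R) \<le> card V"
    by (rule card_mono[OF finite_V hd_nb_walks_upto_subset[OF assms(1)]])
  ultimately show ?thesis by simp
qed

theorem moore_bound_odd:
  assumes x: "x \<in> V" and girth: "girth_exceeds V E (2 * R)"
  shows "3 * 2 ^ R \<le> card V + 2"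
proof -
  have "3 * 2 ^ R + card (neighbours V E x) \<le> card (neighbours V E x) * 2 ^ R + 3"
    using card_neighbours_ge_3[OF x] by (rule mult_add_le_mult_add) simp
  then show ?thesis
    using card_nb_walks_upto_ge[OF x, of "{}" R] card_nb_walks_upto_le[OF x girth, of R "{}"]
    by simp
qed

theorem moore_bound_even:
  assumes xy: "{x, y} \<in> E" and girth: "girth_exceeds V E (2 * R + 1)"
  shows "2 ^ (R + 2) \<le> card V + 2"
proof -
  have x: "x \<in> V" and y: "y \<in> V" and "x \<noteq> y"
    using simple_graph_edgeD[OF simple xy] by auto
  have "y \<in> neighbours V E x" "x \<in> neighbours V E y"
    using x y xy by (auto simp: neighbours_def insert_commute)
  then have deg: "2 \<le> card (neighbours V E x - {y})" "2 \<le> card (neighbours V E y - {x})"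
    using card_neighbours_ge_3[OF x] card_neighbours_ge_3[OF y] finite_neighbours
    by (simp_all add: card_Diff_singleton)
  let ?X = "hd ` nb_walks_upto E x {y} R" and ?Y = "hd ` nb_walks_upto E y {x} R"
  have disj: "?X \<inter> ?Y = {}"
  proof (rule ccontr)
    assume "?X \<inter> ?Y \<noteq> {}"
    then obtain p q where p: "p \<in> nb_walks_upto E x {y} R" and q: "q \<in> nb_walks_upto E y {x} R"
      and "hd p = hd q" by auto
    have "non_backtracking E (p @ [y])"
      using p xy by (intro non_backtracking_snoc)
        (auto simp: nb_walks_upto_def nb_walks_def numeral_2_eq_2)
    then have "p @ [y] = q"
      using nb_walks_uptoD[OF p] nb_walks_uptoD[OF q] \<open>hd p = hd q\<close>
      by (intro short_walks_unique[OF simple girth]) (auto simp: hd_append)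
    then show False
      using q nb_walks_uptoD[OF p]
      by (auto simp: nb_walks_upto_def nb_walks_def nth_append last_conv_nth)
  qed
  have XY: "?X \<subseteq> V" "?Y \<subseteq> V"
    using hd_nb_walks_upto_subset[OF x] hd_nb_walks_upto_subset[OF y] by blast+
  have "card ?X + card ?Y = card (?X \<union> ?Y)"
    using card_Un_disjoint[OF finite_subset[OF XY(1) finite_V] finite_subset[OF XY(2) finite_V] disj]
    by simp
  also have "\<dots> \<le> card V" using card_mono[OF finite_V] XY by simp
  finally have "card ?X + card ?Y \<le> card V" .
  moreover have "card ?X = card (nb_walks_upto E x {y} R)" "card ?Y = card (nb_walks_upto E y {x} R)"
    using inj_on_hd_nb_walks_upto[OF simple girth, of R] by (simp_all add: card_image)
  moreover have "2 * 2 ^ R + card (neighbours V E x - {y}) \<le> card (neighbours V E x - {y}) * 2 ^ R + 2"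
    "2 * 2 ^ R + card (neighbours V E y - {x}) \<le> card (neighbours V E y - {x}) * 2 ^ R + 2"
    using deg by (intro mult_add_le_mult_add; simp)+
  moreover have "(2 :: nat) ^ (R + 2) = 4 * 2 ^ R" by simp
  ultimately show ?thesis
    using card_nb_walks_upto_ge[OF x, of "{y}" R] card_nb_walks_upto_ge[OF y, of "{x}" R]
    by linarith
qed

lemma has_cycle:
  assumes "V \<noteq> {}"
  shows "\<exists>cs. is_cycle V E cs"
proof -
  obtain x where x: "x \<in> V" using assms by blast
  have "0 < card (neighbours V E x - {}) * 2 ^ card V"
    using card_neighbours_ge_3[OF x] by simp
  then have "0 < card (nb_walks E x {} (Suc (card V)))"
    using card_nb_walks_ge[OF x, of "{}" "card V"] by linarith
  then obtain p where p: "p \<in> nb_walks E x {} (Suc (card V))"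
    by (metis card.empty ex_in_conv less_irrefl)
  have "\<not> distinct p"
  proof
    assume "distinct p"
    then have "card (set p) = card V + 2" using p by (simp add: nb_walks_def distinct_card)
    moreover have "card (set p) \<le> card V"
      using card_mono[OF finite_V nb_walks_subset[OF x p]] .
    ultimately show False by simp
  qed
  then show ?thesis
    using shorter_cycle_if_not_distinct[OF simple, of p] p by (auto simp: nb_walks_def)
qed

lemma sum_card_neighbours: "(\<Sum>u\<in>V. card (neighbours V E u)) = 2 * card E"
proof -
  define ends where "ends e = {(u, w). u \<in> V \<and> w \<in> V \<and> {u, w} = e}" for e
  have "E \<subseteq> Pow V"
    by (auto elim: simple_graph_edgeE[OF simple])
  then have finite_E: "finite E"
    using finite_V by (meson finite_Pow_iff finite_subset)
  have card_ends: "card (ends e) = 2" if e: "e \<in> E" for e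
  proof -
    obtain a b where ab: "e = {a, b}" "a \<in> V" "b \<in> V" "a \<noteq> b"
      using simple_graph_edgeE[OF simple e] by blast
    have "ends e = {(a, b), (b, a)}"
      unfolding ends_def ab(1) using ab(2,3) by (auto simp: doubleton_eq_iff)
    then show ?thesis using ab(4) by simp
  qed
  have finite_ends: "finite (ends e)" for e
    by (rule finite_subset[of _ "V \<times> V"]) (auto simp: ends_def finite_V)
  have disjoint_ends: "ends e \<inter> ends e' = {}" if "e \<noteq> e'" for e e'
    using that unfolding ends_def by blast
  have "(\<Sum>u\<in>V. card (neighbours V E u)) = card (Sigma V (neighbours V E))"
    using finite_V finite_neighbours by simp
  also have "Sigma V (neighbours V E) = (\<Union>e\<in>E. ends e)"
    unfolding ends_def neighbours_def by blast
  also have "card \<dots> = (\<Sum>e\<in>E. card (ends e))"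
    using finite_E finite_ends disjoint_ends by (intro card_UN_disjoint) auto
  also have "\<dots> = 2 * card E" using card_ends by simp
  finally show ?thesis .
qed

lemma three_card_V_le: "3 * card V \<le> 2 * card E"
proof -
  have "(\<Sum>u\<in>V. 3) \<le> (\<Sum>u\<in>V. card (neighbours V E u))"
    by (rule sum_mono) (rule card_neighbours_ge_3)
  then show ?thesis using sum_card_neighbours by simp
qed

lemma cubic_if_card_E:
  assumes "2 * card E = 3 * card V"
  shows "\<forall>u\<in>V. card (neighbours V E u) = 3"
proof -
  have "(\<Sum>u\<in>V. card (neighbours V E u) - 3) = (\<Sum>u\<in>V. card (neighbours V E u)) - (\<Sum>u\<in>V. 3)"
    using card_neighbours_ge_3 by (intro sum_subtractf_nat) auto
  also have "\<dots> = 0" using sum_card_neighbours assms by simp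
  finally show ?thesis
    using finite_V card_neighbours_ge_3 by fastforce
qed

end

locale cubic_girth_graph = min_degree_3_graph +
  fixes L :: nat
  assumes cubic: "\<forall>u\<in>V. card (neighbours V E u) = 3"
    and girth: "girth_exceeds V E L"
begin

lemma mem_neighbours: "w \<in> neighbours V E u \<longleftrightarrow> {u, w} \<in> E"
  using simple_graph_edgeD[OF simple] by (auto simp: neighbours_def)

lemma neighbours_sym: "u \<in> neighbours V E w \<longleftrightarrow> w \<in> neighbours V E u"
  by (simp add: mem_neighbours insert_commute)

lemma no_distinct_short_walks:
  assumes "non_backtracking E p" "non_backtracking E q" "p \<noteq> q" "p \<noteq> []" "q \<noteq> []"
    "hd p = hd q" "last p = last q" "length p + length q \<le> L + 2"
  shows False
  using short_walks_unique[OF simple girth assms(1,2,4-8)] assms(3) by simp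

lemma no_4_cycle:
  assumes "4 \<le> L" "{a, p} \<in> E" "{a, q} \<in> E" "p \<noteq> q" "a \<noteq> b"
  shows "\<not> ({b, p} \<in> E \<and> {b, q} \<in> E)"
  using no_distinct_short_walks[of "[b, p, a]" "[b, q, a]"] assms by (auto simp: insert_commute)

lemma obtain_neighbours:
  assumes "u \<in> V"
  obtains a b c where "neighbours V E u = {a, b, c}" "a \<noteq> b" "a \<noteq> c" "b \<noteq> c"
  using cubic assms by (auto simp: card_3_iff)

lemma obtain_other_neighbours:
  assumes "{u, w} \<in> E"
  obtains p q where "neighbours V E u = {w, p, q}" "w \<noteq> p" "w \<noteq> q" "p \<noteq> q"
proof -
  have u: "u \<in> V" and w: "w \<in> neighbours V E u"
    using assms simple_graph_edgeD[OF simple] mem_neighbours by auto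
  then have "card (neighbours V E u - {w}) = 2"
    using cubic finite_neighbours by (simp add: card_Diff_singleton)
  then obtain p q where "neighbours V E u - {w} = {p, q}" "p \<noteq> q"
    by (auto simp: card_2_iff)
  then show ?thesis using that w by blast
qed

lemma neighbours_eq_if_subset:
  assumes "u \<in> V" "neighbours V E u \<subseteq> {a, b, c}"
  shows "neighbours V E u = {a, b, c}"
proof -
  have "card {a, b, c} \<le> 3" by (simp add: card_insert_le_m1)
  then show ?thesis
    using card_subset_eq[of "{a, b, c}" "neighbours V E u"] card_mono[of "{a, b, c}"] cubic assms
    by (metis dual_order.antisym finite.emptyI finite.insertI)
qed

lemma neighbours_eq_if_superset:
  assumes "u \<in> V" "{a, b, c} \<subseteq> neighbours V E u" "a \<noteq> b" "a \<noteq> c" "b \<noteq> c"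
  shows "neighbours V E u = {a, b, c}"
proof -
  have "card {a, b, c} = card (neighbours V E u)" using assms cubic by simp
  then show ?thesis using card_subset_eq[OF finite_neighbours assms(2)] by simp
qed

lemma V_eq_set:
  assumes "distinct xs" "set xs \<subseteq> V" "length xs = card V"
  shows "V = set xs"
  using card_subset_eq[OF finite_V assms(2)] assms by (simp add: distinct_card)

text \<open>This is how the vertices of a breadth-first search tree are shown to be distinct.\<close>
lemma distinct_map_hd_short_walks:
  assumes "\<forall>p\<in>set ws. non_backtracking E p \<and> p \<noteq> [] \<and> last p = r \<and> 2 * length p \<le> L + 2"
    and "distinct ws"
  shows "distinct (map hd ws)"
proof -
  have "inj_on hd (set ws)"
  proof (rule inj_onI)
    fix p q assume pq: "p \<in> set ws" "q \<in> set ws" "hd p = hd q"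
    from pq(1) assms(1) have p: "non_backtracking E p" "p \<noteq> []" "last p = r" "2 * length p \<le> L + 2"
      by auto
    from pq(2) assms(1) have q: "non_backtracking E q" "q \<noteq> []" "last q = r" "2 * length q \<le> L + 2"
      by auto
    show "p = q"
      by (rule short_walks_unique[OF simple girth p(1) q(1) p(2) q(2) pq(3)]) (use p q in auto)
  qed
  then show ?thesis using assms(2) by (simp add: distinct_map)
qed

lemma disjoint_hd_short_walks:
  assumes "\<forall>p\<in>set ws. non_backtracking E p \<and> p \<noteq> [] \<and> last p = r \<and> length p \<le> m"
    and "\<forall>p\<in>set ws'. non_backtracking E p \<and> p \<noteq> [] \<and> last p = r \<and> length p \<le> m'"
    and "m + m' \<le> L + 2" "set ws \<inter> set ws' = {}"
  shows "set (map hd ws) \<inter> set (map hd ws') = {}"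
proof -
  have "p = q" if pq: "p \<in> set ws" "q \<in> set ws'" "hd p = hd q" for p q
  proof -
    from pq(1) assms(1) have p: "non_backtracking E p" "p \<noteq> []" "last p = r" "length p \<le> m"
      by auto
    from pq(2) assms(2) have q: "non_backtracking E q" "q \<noteq> []" "last q = r" "length q \<le> m'"
      by auto
    show "p = q"
      by (rule short_walks_unique[OF simple girth p(1) q(1) p(2) q(2) pq(3)]) (use p q assms(3) in auto)
  qed
  then show ?thesis using assms(4) by auto
qed

end

definition adj_list_edges :: "nat list list \<Rightarrow> nat set set" where
  "adj_list_edges al = {{i, j} | i j. i < length al \<and> j \<in> set (al ! i)}"

lemma graph_iso_adj_list:
  fixes xs :: "'a list"
  assumes "distinct xs" "V = set xs" "length al = length xs"
    and N: "\<forall>i<length xs. neighbours V E (xs ! i) = (!) xs ` set (al ! i)"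
    and range: "\<forall>i<length xs. set (al ! i) \<subseteq> {0..<length xs}"
  shows "graph_iso V E {0..<length al} (adj_list_edges al)"
proof -
  let ?I = "{0..<length xs}"
  have inj: "inj_on ((!) xs) ?I" using inj_on_nth[OF assms(1)] by simp
  have image: "(!) xs ` ?I = V" using assms(2) by (auto simp: in_set_conv_nth)
  have bij: "bij_betw ((!) xs) ?I V" by (simp add: bij_betw_def inj image)
  define f where "f = inv_into ?I ((!) xs)"
  have key: "{xs ! i, xs ! j} \<in> E \<longleftrightarrow> j \<in> set (al ! i)" if ij: "i \<in> ?I" "j \<in> ?I" for i j
  proof -
    have "xs ! j \<in> V" using ij image by blast
    then have "{xs ! i, xs ! j} \<in> E \<longleftrightarrow> xs ! j \<in> neighbours V E (xs ! i)"
      by (simp add: neighbours_def)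
    also have "\<dots> \<longleftrightarrow> xs ! j \<in> (!) xs ` set (al ! i)" using N ij by simp
    also have "\<dots> \<longleftrightarrow> j \<in> set (al ! i)"
      using inj_on_image_mem_iff[OF inj ij(2)] range ij(1) by simp
    finally show ?thesis .
  qed
  have edges: "{i, j} \<in> adj_list_edges al \<longleftrightarrow> j \<in> set (al ! i) \<or> i \<in> set (al ! j)"
    if "i \<in> ?I" "j \<in> ?I" for i j
    unfolding adj_list_edges_def using that assms(3) by (auto simp: doubleton_eq_iff)
  show ?thesis unfolding graph_iso_def
  proof (intro exI conjI ballI)
    show "bij_betw f V {0..<length al}"
      unfolding f_def using bij_betw_inv_into[OF bij] assms(3) by simp
  next
    fix u v assume "u \<in> V" "v \<in> V"
    then obtain i j where ij: "i \<in> ?I" "j \<in> ?I" "u = xs ! i" "v = xs ! j"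
      unfolding image[symmetric] by blast
    then have "f u = i" "f v = j" using inj by (simp_all add: f_def inv_into_f_f)
    then show "{u, v} \<in> E \<longleftrightarrow> {f u, f v} \<in> adj_list_edges al"
      using key[OF ij(1,2)] key[OF ij(2,1)] edges[OF ij(1,2)] ij(3,4)
      by (auto simp: insert_commute)
  qed
qed

definition K33_adj :: "nat list list" where
  "K33_adj = [[1, 2, 3], [0, 4, 5], [0, 4, 5], [0, 4, 5], [1, 2, 3], [1, 2, 3]]"

lemma graph_iso_K33:
  assumes "cubic_girth_graph V E 3" "card V = 6"
  shows "graph_iso V E {0..<length K33_adj} (adj_list_edges K33_adj)"
proof -
  interpret cubic_girth_graph V E 3 by (rule assms(1))
  obtain x where x: "x \<in> V" using assms(2) by fastforce
  obtain y a1 a2 where Nx: "neighbours V E x = {y, a1, a2}" "y \<noteq> a1" "y \<noteq> a2" "a1 \<noteq> a2"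
    using obtain_neighbours[OF x] by blast
  have ex: "{y, x} \<in> E" "{a1, x} \<in> E" "{a2, x} \<in> E"
    using Nx mem_neighbours by (auto simp: insert_commute)
  obtain b1 b2 where Ny: "neighbours V E y = {x, b1, b2}" "x \<noteq> b1" "x \<noteq> b2" "b1 \<noteq> b2"
    using obtain_other_neighbours[OF ex(1)] by blast
  have ey: "{b1, y} \<in> E" "{b2, y} \<in> E"
    using Ny mem_neighbours by (auto simp: insert_commute)
  have a_ne_b: "a \<noteq> b" if "{a, x} \<in> E" "{b, y} \<in> E" for a b
  proof
    assume "a = b"
    moreover have "a \<noteq> x" using that(1) simple_graph_edgeD[OF simple] by blast
    ultimately show False
      using no_distinct_short_walks[of "[a, x]" "[a, y, x]"] that ex(1) by (simp add: insert_commute)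
  qed
  have ne: "x \<noteq> y" "x \<noteq> a1" "x \<noteq> a2" "y \<noteq> b1" "y \<noteq> b2"
    using simple_graph_edgeD[OF simple ex(1)] simple_graph_edgeD[OF simple ex(2)] simple_graph_edgeD[OF simple ex(3)]
      simple_graph_edgeD[OF simple ey(1)] simple_graph_edgeD[OF simple ey(2)] by auto
  then have dist: "distinct [x, y, a1, a2, b1, b2]"
    using a_ne_b[OF ex(2) ey(1)] a_ne_b[OF ex(2) ey(2)] a_ne_b[OF ex(3) ey(1)] a_ne_b[OF ex(3) ey(2)]
      Nx(2-4) Ny(2-4) by auto
  have V: "V = {x, y, a1, a2, b1, b2}"
    using V_eq_set[OF dist] x ex ey simple_graph_edgeD[OF simple] assms(2) by auto
  have Na: "neighbours V E a = {x, b1, b2}" if a: "a \<in> {a1, a2}" for a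
  proof (rule neighbours_eq_if_subset)
    show "a \<in> V" using a V by auto
    have ax: "{a, x} \<in> E" using a ex by auto
    then have "a \<noteq> x" using simple_graph_edgeD[OF simple] by blast
    show "neighbours V E a \<subseteq> {x, b1, b2}"
    proof
      fix w assume "w \<in> neighbours V E a"
      then have aw: "{a, w} \<in> E" "w \<in> V" "w \<noteq> a"
        using mem_neighbours simple_graph_edgeD[OF simple] by auto
      have "w \<noteq> y"
        using no_distinct_short_walks[of "[a, y, x]" "[a, x]"] aw ax \<open>a \<noteq> x\<close> ex(1) by (auto simp: insert_commute)
      moreover have "w \<notin> {a1, a2}"
        using no_distinct_short_walks[of "[w, a, x]" "[w, x]"] aw ax \<open>a \<noteq> x\<close> ex ne by (auto simp: insert_commute)
      ultimately show "w \<in> {x, b1, b2}" using aw(2) V by auto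
    qed
  qed
  have Nb: "neighbours V E b = {y, a1, a2}" if b: "b \<in> {b1, b2}" for b
  proof (rule neighbours_eq_if_superset)
    show "b \<in> V" using b V by auto
    show "{y, a1, a2} \<subseteq> neighbours V E b"
      using b Ny Na[of a1] Na[of a2] neighbours_sym[of y b] neighbours_sym[of a1 b]
        neighbours_sym[of a2 b] by auto
  qed (use Nx in auto)
  have "V = set [x, y, a1, a2, b1, b2]" using V by simp
  then show ?thesis
    by (rule graph_iso_adj_list[OF dist])
      (simp_all add: K33_adj_def All_less_Suc eval_nat_numeral Nx Ny Na Nb insert_commute)
qed

lemma obtain_member_of_pair:
  assumes "(p \<in> A) \<noteq> (q \<in> A)"
  obtains p' q' where "p' \<in> A" "p' = p \<and> q' = q \<or> p' = q \<and> q' = p"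
  using assms that by blast

definition petersen_adj :: "nat list list" where
  "petersen_adj = [[1, 2, 3], [0, 4, 5], [0, 6, 7], [0, 8, 9], [1, 6, 8], [1, 7, 9], [2, 4, 9],
    [2, 5, 8], [3, 4, 7], [3, 5, 6]]"

context cubic_girth_graph
begin

text \<open>In the breadth-first search tree of depth 2 from x, a leaf b below the child ai is adjacent,
  apart from ai, to exactly one leaf below each of the other two children.\<close>
lemma petersen_leaf_neighbours:
  assumes "4 \<le> L"
    and Nx: "neighbours V E x = {ai, aj, ak}" and Ni: "neighbours V E ai = {x, b, b'}"
    and Nj: "neighbours V E aj = {x, c1, c2}" and Nk: "neighbours V E ak = {x, d1, d2}"
    and V: "V \<subseteq> {x, ai, aj, ak, b, b', c1, c2, d1, d2}"
    and dist: "distinct [x, ai, aj, ak, b, b', c1, c2, d1, d2]"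
  shows "(c1 \<in> neighbours V E b) \<noteq> (c2 \<in> neighbours V E b)"
    "(d1 \<in> neighbours V E b) \<noteq> (d2 \<in> neighbours V E b)"
    "neighbours V E b \<subseteq> {ai, c1, c2, d1, d2}"
proof -
  have e: "{x, ai} \<in> E" "{x, aj} \<in> E" "{x, ak} \<in> E" "{ai, b} \<in> E" "{ai, b'} \<in> E"
    "{aj, c1} \<in> E" "{aj, c2} \<in> E" "{ak, d1} \<in> E" "{ak, d2} \<in> E"
    using Nx Ni Nj Nk mem_neighbours by auto
  then have e': "{ai, x} \<in> E" "{aj, x} \<in> E" "{ak, x} \<in> E" "{b, ai} \<in> E" "{b', ai} \<in> E"
    "{c1, aj} \<in> E" "{c2, aj} \<in> E" "{d1, ak} \<in> E" "{d2, ak} \<in> E"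
    by (simp_all add: insert_commute)
  note edges = e e'
  have b: "b \<in> V" using e simple_graph_edgeD[OF simple] by blast
  have sub: "neighbours V E b \<subseteq> {ai, c1, c2, d1, d2}"
  proof
    fix w assume "w \<in> neighbours V E b"
    then have w: "{b, w} \<in> E" "{w, b} \<in> E" "w \<in> V" "w \<noteq> b"
      using mem_neighbours simple_graph_edgeD[OF simple] by (auto simp: insert_commute)
    have "w \<noteq> x" using no_distinct_short_walks[of "[b, x]" "[b, ai, x]"] w edges dist assms(1) by auto
    moreover have "w \<noteq> aj" "w \<noteq> ak"
      using no_distinct_short_walks[of "[b, w, x]" "[b, ai, x]"] w edges dist assms(1) by auto
    moreover have "w \<noteq> b'"
      using no_distinct_short_walks[of "[b', b, ai]" "[b', ai]"] w edges dist assms(1) by auto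
    ultimately show "w \<in> {ai, c1, c2, d1, d2}" using w V by auto
  qed
  have nc: "\<not> (c1 \<in> neighbours V E b \<and> c2 \<in> neighbours V E b)"
    using no_4_cycle[of aj c1 c2 b] edges dist assms(1) mem_neighbours by auto
  have nd: "\<not> (d1 \<in> neighbours V E b \<and> d2 \<in> neighbours V E b)"
    using no_4_cycle[of ak d1 d2 b] edges dist assms(1) mem_neighbours by auto
  have "ai \<in> neighbours V E b" using edges mem_neighbours by auto
  then have "neighbours V E b \<noteq> {ai, d1, d2}" "neighbours V E b \<noteq> {ai, c1, c2}"
    using nc nd by auto
  then have "c1 \<in> neighbours V E b \<or> c2 \<in> neighbours V E b"
    "d1 \<in> neighbours V E b \<or> d2 \<in> neighbours V E b"
    using neighbours_eq_if_subset[OF b] sub by blast+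
  then show "(c1 \<in> neighbours V E b) \<noteq> (c2 \<in> neighbours V E b)"
    "(d1 \<in> neighbours V E b) \<noteq> (d2 \<in> neighbours V E b)"
    using nc nd by blast+
  show "neighbours V E b \<subseteq> {ai, c1, c2, d1, d2}" by (rule sub)
qed

lemma graph_iso_petersen_normalized:
  assumes "4 \<le> L"
    and Nx: "neighbours V E x = {a1, a2, a3}" and Na1: "neighbours V E a1 = {x, b11, b12}"
    and Na2: "neighbours V E a2 = {x, b21, b22}" and Na3: "neighbours V E a3 = {x, b31, b32}"
    and V: "V = {x, a1, a2, a3, b11, b12, b21, b22, b31, b32}"
    and dist: "distinct [x, a1, a2, a3, b11, b12, b21, b22, b31, b32]"
    and "{b11, b21} \<in> E" "{b11, b31} \<in> E"
  shows "graph_iso V E {0..<length petersen_adj} (adj_list_edges petersen_adj)"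
proof -
  let ?N = "neighbours V E"
  have perm: "?N x = {a2, a1, a3}" "?N x = {a3, a1, a2}" "?N a1 = {x, b12, b11}"
    "?N a2 = {x, b22, b21}" "?N a3 = {x, b32, b31}"
    using Nx Na1 Na2 Na3 by auto
  note leaf = petersen_leaf_neighbours[OF assms(1)]
  have g11: "(b21 \<in> ?N b11) \<noteq> (b22 \<in> ?N b11)" "(b31 \<in> ?N b11) \<noteq> (b32 \<in> ?N b11)"
    "?N b11 \<subseteq> {a1, b21, b22, b31, b32}"
    using leaf[OF Nx Na1 Na2 Na3] V dist by auto
  have g12: "(b21 \<in> ?N b12) \<noteq> (b22 \<in> ?N b12)" "(b31 \<in> ?N b12) \<noteq> (b32 \<in> ?N b12)"
    "?N b12 \<subseteq> {a1, b21, b22, b31, b32}"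
    using leaf[OF Nx perm(3) Na2 Na3] V dist by auto
  have g21: "(b11 \<in> ?N b21) \<noteq> (b12 \<in> ?N b21)" "(b31 \<in> ?N b21) \<noteq> (b32 \<in> ?N b21)"
    "?N b21 \<subseteq> {a2, b11, b12, b31, b32}"
    using leaf[OF perm(1) Na2 Na1 Na3] V dist by auto
  have g22: "(b31 \<in> ?N b22) \<noteq> (b32 \<in> ?N b22)"
    "?N b22 \<subseteq> {a2, b11, b12, b31, b32}"
    using leaf[OF perm(1) perm(4) Na1 Na3] V dist by auto
  have g31: "(b11 \<in> ?N b31) \<noteq> (b12 \<in> ?N b31)"
    using leaf[OF perm(2) Na3 Na1 Na2] V dist by auto
  have inV: "b11 \<in> V" "b12 \<in> V" "b21 \<in> V" "b22 \<in> V" "b31 \<in> V" "b32 \<in> V"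
    using V by auto
  have m: "b21 \<in> ?N b11" "b31 \<in> ?N b11" using assms(8,9) mem_neighbours by auto
  then have m': "b11 \<in> ?N b21" "b11 \<in> ?N b31" using neighbours_sym by auto
  have NB11: "?N b11 = {a1, b21, b31}"
    using neighbours_eq_if_subset[OF inV(1), of a1 b21 b31] g11 m by blast
  have "b12 \<notin> ?N b21" "b12 \<notin> ?N b31" using g21(1) g31 m' by blast+
  then have "b22 \<in> ?N b12" "b32 \<in> ?N b12"
    using g12(1,2) neighbours_sym[of b12 b21] neighbours_sym[of b12 b31] by blast+
  then have NB12: "?N b12 = {a1, b22, b32}"
    using neighbours_eq_if_subset[OF inV(2), of a1 b22 b32] g12 by blast
  have "b31 \<notin> ?N b21"
  proof
    assume "b31 \<in> ?N b21"
    then have "{b31, b21} \<in> E" using mem_neighbours neighbours_sym by blast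
    moreover have "{b21, b11} \<in> E" "{b31, b11} \<in> E" using m' mem_neighbours by auto
    ultimately show False
      using no_distinct_short_walks[of "[b31, b21, b11]" "[b31, b11]"] dist assms(1) by auto
  qed
  then have NB21: "?N b21 = {a2, b11, b32}"
    using neighbours_eq_if_subset[OF inV(3), of a2 b11 b32] g21 m' \<open>b12 \<notin> ?N b21\<close> by blast
  have "b12 \<in> ?N b22" "b32 \<in> ?N b12" "b22 \<in> ?N b12"
    using NB12 neighbours_sym[of b12 b22] by auto
  have "b32 \<notin> ?N b22"
  proof
    assume "b32 \<in> ?N b22"
    then have "{b32, b22} \<in> E" using mem_neighbours neighbours_sym by blast
    moreover have "{b22, b12} \<in> E" "{b32, b12} \<in> E" using NB12 mem_neighbours neighbours_sym by auto
    ultimately show False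
      using no_distinct_short_walks[of "[b32, b22, b12]" "[b32, b12]"] dist assms(1) by auto
  qed
  moreover have "b11 \<notin> ?N b22" using NB11 dist neighbours_sym[of b11 b22] by auto
  ultimately have NB22: "?N b22 = {a2, b12, b31}"
    using neighbours_eq_if_subset[OF inV(4), of a2 b12 b31] g22 by blast
  have NB31: "?N b31 = {a3, b11, b22}"
    using neighbours_eq_if_superset[OF inV(5)] Na3 NB11 NB22 dist
      neighbours_sym[of a3 b31] neighbours_sym[of b11 b31] neighbours_sym[of b22 b31] by auto
  have NB32: "?N b32 = {a3, b12, b21}"
    using neighbours_eq_if_superset[OF inV(6)] Na3 NB12 NB21 dist
      neighbours_sym[of a3 b32] neighbours_sym[of b12 b32] neighbours_sym[of b21 b32] by auto
  have "V = set [x, a1, a2, a3, b11, b12, b21, b22, b31, b32]" using V by simp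
  then show ?thesis
    by (rule graph_iso_adj_list[OF dist])
      (simp_all add: petersen_adj_def All_less_Suc eval_nat_numeral Nx Na1 Na2 Na3
        NB11 NB12 NB21 NB22 NB31 NB32 insert_commute)
qed

end

lemma graph_iso_petersen:
  assumes "cubic_girth_graph V E 4" "card V = 10"
  shows "graph_iso V E {0..<length petersen_adj} (adj_list_edges petersen_adj)"
proof -
  interpret cubic_girth_graph V E 4 by (rule assms(1))
  let ?N = "neighbours V E"
  obtain x where x: "x \<in> V" using assms(2) by fastforce
  obtain a1 a2 a3 where Nx: "?N x = {a1, a2, a3}" "a1 \<noteq> a2" "a1 \<noteq> a3" "a2 \<noteq> a3"
    using obtain_neighbours[OF x] by blast
  have ex: "{a1, x} \<in> E" "{a2, x} \<in> E" "{a3, x} \<in> E"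
    using Nx mem_neighbours by (auto simp: insert_commute)
  obtain b11 b12 where N1: "?N a1 = {x, b11, b12}" "x \<noteq> b11" "x \<noteq> b12" "b11 \<noteq> b12"
    using obtain_other_neighbours[OF ex(1)] by blast
  obtain b21 b22 where N2: "?N a2 = {x, b21, b22}" "x \<noteq> b21" "x \<noteq> b22" "b21 \<noteq> b22"
    using obtain_other_neighbours[OF ex(2)] by blast
  obtain b31 b32 where N3: "?N a3 = {x, b31, b32}" "x \<noteq> b31" "x \<noteq> b32" "b31 \<noteq> b32"
    using obtain_other_neighbours[OF ex(3)] by blast
  have eb: "{b11, a1} \<in> E" "{b12, a1} \<in> E" "{b21, a2} \<in> E" "{b22, a2} \<in> E" "{b31, a3} \<in> E"
    "{b32, a3} \<in> E"
    using N1 N2 N3 mem_neighbours by (auto simp: insert_commute)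
  have "distinct (map hd [[x], [a1, x], [a2, x], [a3, x], [b11, a1, x], [b12, a1, x],
      [b21, a2, x], [b22, a2, x], [b31, a3, x], [b32, a3, x]])"
    by (rule distinct_map_hd_short_walks[of _ x]) (use ex eb N1 N2 N3 Nx in auto)
  then have dist: "distinct [x, a1, a2, a3, b11, b12, b21, b22, b31, b32]" by simp
  have V: "V = {x, a1, a2, a3, b11, b12, b21, b22, b31, b32}"
    using V_eq_set[OF dist] x ex eb simple_graph_edgeD[OF simple] assms(2) by auto
  have "(b21 \<in> ?N b11) \<noteq> (b22 \<in> ?N b11)" "(b31 \<in> ?N b11) \<noteq> (b32 \<in> ?N b11)"
    using petersen_leaf_neighbours[OF order.refl Nx(1) N1(1) N2(1) N3(1) equalityD1[OF V] dist]
    by blast+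
  \<comment> \<open>Relabel the leaves below a2 and below a3 so that b11 is adjacent to the first
    of each pair.\<close>
  then obtain p2 q2 p3 q3 where p: "p2 \<in> ?N b11" "p3 \<in> ?N b11"
    and pq: "p2 = b21 \<and> q2 = b22 \<or> p2 = b22 \<and> q2 = b21" "p3 = b31 \<and> q3 = b32 \<or> p3 = b32 \<and> q3 = b31"
    by (metis obtain_member_of_pair)
  have "?N a2 = {x, p2, q2}" "?N a3 = {x, p3, q3}"
    "V = {x, a1, a2, a3, b11, b12, p2, q2, p3, q3}"
    "distinct [x, a1, a2, a3, b11, b12, p2, q2, p3, q3]"
    using pq N2(1) N3(1) V dist by (elim disjE conjE; simp add: insert_commute)+
  moreover have "{b11, p2} \<in> E" "{b11, p3} \<in> E" using p mem_neighbours by auto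
  ultimately show ?thesis
    using graph_iso_petersen_normalized[OF order.refl Nx(1) N1(1)] by simp
qed

definition heawood_adj :: "nat list list" where
  "heawood_adj = [[1, 2, 3], [0, 4, 5], [0, 6, 7], [0, 8, 9], [1, 10, 11], [1, 12, 13],
    [2, 10, 12], [2, 11, 13], [3, 10, 13], [3, 11, 12], [4, 6, 8], [4, 7, 9], [5, 6, 9], [5, 7, 8]]"

context cubic_girth_graph
begin

text \<open>In the breadth-first search tree of depth 2 from the edge xy, a leaf c on the side of x
  is adjacent, apart from its parent ai, to exactly one leaf below each child of y.\<close>
lemma heawood_leaf_neighbours:
  assumes "5 \<le> L"
    and Nx: "neighbours V E x = {y, ai, aj}" and Ny: "neighbours V E y = {x, b1, b2}"
    and Ni: "neighbours V E ai = {x, c, c'}" and Nj: "neighbours V E aj = {x, e1, e2}"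
    and Nb1: "neighbours V E b1 = {y, d1, d2}" and Nb2: "neighbours V E b2 = {y, d3, d4}"
    and V: "V \<subseteq> {x, y, ai, aj, b1, b2, c, c', e1, e2, d1, d2, d3, d4}"
    and dist: "distinct [x, y, ai, aj, b1, b2, c, c', e1, e2, d1, d2, d3, d4]"
  shows "(d1 \<in> neighbours V E c) \<noteq> (d2 \<in> neighbours V E c)"
    "(d3 \<in> neighbours V E c) \<noteq> (d4 \<in> neighbours V E c)"
    "neighbours V E c \<subseteq> {ai, d1, d2, d3, d4}"
proof -
  have e: "{x, y} \<in> E" "{x, ai} \<in> E" "{x, aj} \<in> E" "{y, b1} \<in> E" "{y, b2} \<in> E"
    "{ai, c} \<in> E" "{ai, c'} \<in> E" "{aj, e1} \<in> E" "{aj, e2} \<in> E"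
    "{b1, d1} \<in> E" "{b1, d2} \<in> E" "{b2, d3} \<in> E" "{b2, d4} \<in> E"
    using Nx Ny Ni Nj Nb1 Nb2 mem_neighbours by auto
  then have e': "{y, x} \<in> E" "{ai, x} \<in> E" "{aj, x} \<in> E" "{b1, y} \<in> E" "{b2, y} \<in> E"
    "{c, ai} \<in> E" "{c', ai} \<in> E" "{e1, aj} \<in> E" "{e2, aj} \<in> E"
    "{d1, b1} \<in> E" "{d2, b1} \<in> E" "{d3, b2} \<in> E" "{d4, b2} \<in> E"
    by (simp_all add: insert_commute)
  note edges = e e'
  have c: "c \<in> V" using e simple_graph_edgeD[OF simple] by blast
  have sub: "neighbours V E c \<subseteq> {ai, d1, d2, d3, d4}"
  proof
    fix w assume "w \<in> neighbours V E c"
    then have w: "{c, w} \<in> E" "{w, c} \<in> E" "w \<in> V" "w \<noteq> c"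
      using mem_neighbours simple_graph_edgeD[OF simple] by (auto simp: insert_commute)
    have "w \<noteq> x" using no_distinct_short_walks[of "[c, x]" "[c, ai, x]"] w edges dist assms(1) by auto
    moreover have "w \<noteq> y" "w \<noteq> aj"
      using no_distinct_short_walks[of "[c, w, x]" "[c, ai, x]"] w edges dist assms(1) by auto
    moreover have "w \<noteq> b1" "w \<noteq> b2"
      using no_distinct_short_walks[of "[c, w, y, x]" "[c, ai, x]"] w edges dist assms(1) by auto
    moreover have "w \<noteq> e1" "w \<noteq> e2"
      using no_distinct_short_walks[of "[c, w, aj, x]" "[c, ai, x]"] w edges dist assms(1) by auto
    moreover have "w \<noteq> c'"
      using no_distinct_short_walks[of "[c', c, ai]" "[c', ai]"] w edges dist assms(1) by auto
    ultimately show "w \<in> {ai, d1, d2, d3, d4}" using w V by auto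
  qed
  have n1: "\<not> (d1 \<in> neighbours V E c \<and> d2 \<in> neighbours V E c)"
    using no_4_cycle[of b1 d1 d2 c] edges dist assms(1) mem_neighbours by auto
  have n2: "\<not> (d3 \<in> neighbours V E c \<and> d4 \<in> neighbours V E c)"
    using no_4_cycle[of b2 d3 d4 c] edges dist assms(1) mem_neighbours by auto
  have "ai \<in> neighbours V E c" using edges mem_neighbours by auto
  then have "neighbours V E c \<noteq> {ai, d1, d2}" "neighbours V E c \<noteq> {ai, d3, d4}"
    using n1 n2 by auto
  then have "d1 \<in> neighbours V E c \<or> d2 \<in> neighbours V E c"
    "d3 \<in> neighbours V E c \<or> d4 \<in> neighbours V E c"
    using neighbours_eq_if_subset[OF c] sub by blast+
  then show "(d1 \<in> neighbours V E c) \<noteq> (d2 \<in> neighbours V E c)"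
    "(d3 \<in> neighbours V E c) \<noteq> (d4 \<in> neighbours V E c)"
    using n1 n2 by blast+
  show "neighbours V E c \<subseteq> {ai, d1, d2, d3, d4}" by (rule sub)
qed

lemma graph_iso_heawood_normalized:
  assumes "5 \<le> L"
    and Nx: "neighbours V E x = {y, a1, a2}" and Ny: "neighbours V E y = {x, b1, b2}"
    and Na1: "neighbours V E a1 = {x, c11, c12}" and Na2: "neighbours V E a2 = {x, c21, c22}"
    and Nb1: "neighbours V E b1 = {y, d11, d12}" and Nb2: "neighbours V E b2 = {y, d21, d22}"
    and V: "V = {x, y, a1, a2, b1, b2, c11, c12, c21, c22, d11, d12, d21, d22}"
    and dist: "distinct [x, y, a1, a2, b1, b2, c11, c12, c21, c22, d11, d12, d21, d22]"
    and "{c11, d11} \<in> E" "{c11, d21} \<in> E" "{c21, d11} \<in> E"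
  shows "graph_iso V E {0..<length heawood_adj} (adj_list_edges heawood_adj)"
proof -
  let ?N = "neighbours V E"
  have perm: "?N x = {y, a2, a1}" "?N y = {x, b2, b1}" "?N a1 = {x, c12, c11}"
    "?N a2 = {x, c22, c21}"
    using Nx Ny Na1 Na2 by auto
  note leaf = heawood_leaf_neighbours[OF assms(1)]
  have V': "V \<subseteq> {x, y, a1, a2, b1, b2, c11, c12, c21, c22, d11, d12, d21, d22}"
    "V \<subseteq> {x, y, a1, a2, b1, b2, c12, c11, c21, c22, d11, d12, d21, d22}"
    "V \<subseteq> {x, y, a2, a1, b1, b2, c21, c22, c11, c12, d11, d12, d21, d22}"
    "V \<subseteq> {x, y, a2, a1, b1, b2, c22, c21, c11, c12, d11, d12, d21, d22}"
    "V \<subseteq> {y, x, b1, b2, a1, a2, d11, d12, d21, d22, c11, c12, c21, c22}"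
    "V \<subseteq> {y, x, b2, b1, a1, a2, d21, d22, d11, d12, c11, c12, c21, c22}"
    using V by auto
  have dist': "distinct [x, y, a1, a2, b1, b2, c12, c11, c21, c22, d11, d12, d21, d22]"
    "distinct [x, y, a2, a1, b1, b2, c21, c22, c11, c12, d11, d12, d21, d22]"
    "distinct [x, y, a2, a1, b1, b2, c22, c21, c11, c12, d11, d12, d21, d22]"
    "distinct [y, x, b1, b2, a1, a2, d11, d12, d21, d22, c11, c12, c21, c22]"
    "distinct [y, x, b2, b1, a1, a2, d21, d22, d11, d12, c11, c12, c21, c22]"
    using dist by auto
  note gc11 = leaf[OF Nx Ny Na1 Na2 Nb1 Nb2 V'(1) dist]
    and gc12 = leaf[OF Nx Ny perm(3) Na2 Nb1 Nb2 V'(2) dist'(1)]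
    and gc21 = leaf[OF perm(1) Ny Na2 Na1 Nb1 Nb2 V'(3) dist'(2)]
    and gc22 = leaf[OF perm(1) Ny perm(4) Na1 Nb1 Nb2 V'(4) dist'(3)]
    and gd11 = leaf[OF Ny Nx Nb1 Nb2 Na1 Na2 V'(5) dist'(4)]
    and gd21 = leaf[OF perm(2) Nx Nb2 Nb1 Na1 Na2 V'(6) dist'(5)]
  have inV: "c11 \<in> V" "c12 \<in> V" "c21 \<in> V" "c22 \<in> V" "d11 \<in> V" "d12 \<in> V" "d21 \<in> V" "d22 \<in> V"
    using V by simp_all
  have m: "d11 \<in> ?N c11" "d21 \<in> ?N c11" "d11 \<in> ?N c21" using assms(10-12) mem_neighbours by auto
  then have m': "c11 \<in> ?N d11" "c11 \<in> ?N d21" "c21 \<in> ?N d11" using neighbours_sym by auto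
  have NC11: "?N c11 = {a1, d11, d21}"
    using neighbours_eq_if_subset[OF inV(1), of a1 d11 d21] gc11 m by blast
  have "c12 \<notin> ?N d11" "c12 \<notin> ?N d21" using gd11(1) gd21(1) m' by blast+
  then have "d12 \<in> ?N c12" "d22 \<in> ?N c12"
    using gc12(1,2) neighbours_sym[of c12 d11] neighbours_sym[of c12 d21] by blast+
  then have NC12: "?N c12 = {a1, d12, d22}"
    using neighbours_eq_if_subset[OF inV(2), of a1 d12 d22] gc12 by blast
  have "c22 \<notin> ?N d11" using gd11(2) m' by blast
  then have "d11 \<notin> ?N c22" "d12 \<in> ?N c22" using gc22(1) neighbours_sym[of c22 d11] by blast+
  have "d21 \<notin> ?N c21"
    using no_4_cycle[of c11 d11 d21 c21] assms(1,10-12) dist mem_neighbours by auto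
  then have NC21: "?N c21 = {a2, d11, d22}"
    using neighbours_eq_if_subset[OF inV(3), of a2 d11 d22] gc21 m by blast
  have "c22 \<in> ?N d21"
    using gd21(2) \<open>d21 \<notin> ?N c21\<close> neighbours_sym[of c21 d21] by blast
  then have "d21 \<in> ?N c22" using neighbours_sym by blast
  then have NC22: "?N c22 = {a2, d12, d21}"
    using neighbours_eq_if_subset[OF inV(4), of a2 d12 d21] gc22 \<open>d11 \<notin> ?N c22\<close> by blast
  have ND11: "?N d11 = {b1, c11, c21}"
    using neighbours_eq_if_superset[OF inV(5)] Nb1 NC11 NC21 dist
      neighbours_sym[of b1 d11] neighbours_sym[of c11 d11] neighbours_sym[of c21 d11] by auto
  have ND12: "?N d12 = {b1, c12, c22}"
    using neighbours_eq_if_superset[OF inV(6)] Nb1 NC12 NC22 dist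
      neighbours_sym[of b1 d12] neighbours_sym[of c12 d12] neighbours_sym[of c22 d12] by auto
  have ND21: "?N d21 = {b2, c11, c22}"
    using neighbours_eq_if_superset[OF inV(7)] Nb2 NC11 NC22 dist
      neighbours_sym[of b2 d21] neighbours_sym[of c11 d21] neighbours_sym[of c22 d21] by auto
  have ND22: "?N d22 = {b2, c12, c21}"
    using neighbours_eq_if_superset[OF inV(8)] Nb2 NC12 NC21 dist
      neighbours_sym[of b2 d22] neighbours_sym[of c12 d22] neighbours_sym[of c21 d22] by auto
  have "V = set [x, y, a1, a2, b1, b2, c11, c12, c21, c22, d11, d12, d21, d22]" using V by simp
  then show ?thesis
    by (rule graph_iso_adj_list[OF dist])
      (simp_all add: heawood_adj_def All_less_Suc eval_nat_numeral Nx Ny Na1 Na2 Nb1 Nb2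
        NC11 NC12 NC21 NC22 ND11 ND12 ND21 ND22 insert_commute)
qed

end

lemma graph_iso_heawood:
  assumes "cubic_girth_graph V E 5" "card V = 14"
  shows "graph_iso V E {0..<length heawood_adj} (adj_list_edges heawood_adj)"
proof -
  interpret cubic_girth_graph V E 5 by (rule assms(1))
  let ?N = "neighbours V E"
  obtain x where x: "x \<in> V" using assms(2) by fastforce
  obtain y a1 a2 where Nx: "?N x = {y, a1, a2}" "y \<noteq> a1" "y \<noteq> a2" "a1 \<noteq> a2"
    using obtain_neighbours[OF x] by blast
  have ex: "{y, x} \<in> E" "{a1, x} \<in> E" "{a2, x} \<in> E"
    using Nx mem_neighbours by (auto simp: insert_commute)
  obtain b1 b2 where Ny: "?N y = {x, b1, b2}" "x \<noteq> b1" "x \<noteq> b2" "b1 \<noteq> b2"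
    using obtain_other_neighbours[OF ex(1)] by blast
  have ey: "{b1, y} \<in> E" "{b2, y} \<in> E"
    using Ny mem_neighbours by (auto simp: insert_commute)
  obtain c11 c12 where Na1: "?N a1 = {x, c11, c12}" "x \<noteq> c11" "x \<noteq> c12" "c11 \<noteq> c12"
    using obtain_other_neighbours[OF ex(2)] by blast
  obtain c21 c22 where Na2: "?N a2 = {x, c21, c22}" "x \<noteq> c21" "x \<noteq> c22" "c21 \<noteq> c22"
    using obtain_other_neighbours[OF ex(3)] by blast
  obtain d11 d12 where Nb1: "?N b1 = {y, d11, d12}" "y \<noteq> d11" "y \<noteq> d12" "d11 \<noteq> d12"
    using obtain_other_neighbours[OF ey(1)] by blast
  obtain d21 d22 where Nb2: "?N b2 = {y, d21, d22}" "y \<noteq> d21" "y \<noteq> d22" "d21 \<noteq> d22"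
    using obtain_other_neighbours[OF ey(2)] by blast
  have e2: "{c11, a1} \<in> E" "{c12, a1} \<in> E" "{c21, a2} \<in> E" "{c22, a2} \<in> E"
    "{d11, b1} \<in> E" "{d12, b1} \<in> E" "{d21, b2} \<in> E" "{d22, b2} \<in> E"
    using Na1 Na2 Nb1 Nb2 mem_neighbours by (auto simp: insert_commute)
  note edges = ex ey e2 ex[simplified insert_commute] ey[simplified insert_commute]
  have "distinct (map hd [[x], [a1, x], [a2, x], [c11, a1, x], [c12, a1, x], [c21, a2, x],
      [c22, a2, x]])"
    by (rule distinct_map_hd_short_walks[of _ x]) (use edges Nx Na1 Na2 in auto)
  moreover have "distinct (map hd [[y], [b1, y], [b2, y], [d11, b1, y], [d12, b1, y],
      [d21, b2, y], [d22, b2, y]])"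
    by (rule distinct_map_hd_short_walks[of _ y]) (use edges Ny Nb1 Nb2 in auto)
  moreover have "set (map hd [[x, y], [a1, x, y], [a2, x, y], [c11, a1, x, y], [c12, a1, x, y],
      [c21, a2, x, y], [c22, a2, x, y]]) \<inter>
    set (map hd [[y], [b1, y], [b2, y], [d11, b1, y], [d12, b1, y], [d21, b2, y], [d22, b2, y]])
      = {}"
    by (rule disjoint_hd_short_walks[of _ y 4 _ 3]) (use edges Nx Ny Na1 Na2 Nb1 Nb2 in auto)
  ultimately have dist: "distinct [x, y, a1, a2, b1, b2, c11, c12, c21, c22, d11, d12, d21, d22]"
    by auto
  have V: "V = {x, y, a1, a2, b1, b2, c11, c12, c21, c22, d11, d12, d21, d22}"
    using V_eq_set[OF dist] x edges simple_graph_edgeD[OF simple] assms(2) by auto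
  note leaf = heawood_leaf_neighbours[OF order.refl]
  have "(d11 \<in> ?N c11) \<noteq> (d12 \<in> ?N c11)" "(d21 \<in> ?N c11) \<noteq> (d22 \<in> ?N c11)"
    using leaf[OF Nx(1) Ny(1) Na1(1) Na2(1) Nb1(1) Nb2(1) equalityD1[OF V] dist] by blast+
  \<comment> \<open>Relabel the leaves below b1, b2 and a2 so that c11 is adjacent to the first leaf
    below b1 and below b2, and the first leaf below b1 to the first one below a2.\<close>
  then obtain p1 q1 p2 q2 where p: "p1 \<in> ?N c11" "p2 \<in> ?N c11"
    and pq: "p1 = d11 \<and> q1 = d12 \<or> p1 = d12 \<and> q1 = d11" "p2 = d21 \<and> q2 = d22 \<or> p2 = d22 \<and> q2 = d21"
    by (metis obtain_member_of_pair)
  have Nb': "?N b1 = {y, p1, q1}" "?N b2 = {y, p2, q2}"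
    using pq Nb1(1) Nb2(1) by (elim disjE conjE; simp add: insert_commute)+
  have "V \<subseteq> {y, x, b1, b2, a1, a2, p1, q1, d21, d22, c11, c12, c21, c22}"
    "distinct [y, x, b1, b2, a1, a2, p1, q1, d21, d22, c11, c12, c21, c22]"
    using pq(1) V dist by (elim disjE conjE; simp add: insert_commute)+
  then have "(c21 \<in> ?N p1) \<noteq> (c22 \<in> ?N p1)"
    using leaf[OF Ny(1) Nx(1) Nb'(1) Nb2(1) Na1(1) Na2(1)] by blast
  then obtain p3 q3 where p3: "p3 \<in> ?N p1" and pq3: "p3 = c21 \<and> q3 = c22 \<or> p3 = c22 \<and> q3 = c21"
    by (metis obtain_member_of_pair)
  have "?N a2 = {x, p3, q3}"
    "V = {x, y, a1, a2, b1, b2, c11, c12, p3, q3, p1, q1, p2, q2}"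
    "distinct [x, y, a1, a2, b1, b2, c11, c12, p3, q3, p1, q1, p2, q2]"
    using pq pq3 Na2(1) V dist by (elim disjE conjE; simp add: insert_commute)+
  moreover have "{c11, p1} \<in> E" "{c11, p2} \<in> E" "{p3, p1} \<in> E"
    using p p3 mem_neighbours neighbours_sym by auto
  ultimately show ?thesis
    using graph_iso_heawood_normalized[OF order.refl Nx(1) Ny(1) Na1(1) _ Nb'] by simp
qed

lemma girth_exceeds_girth:
  assumes "\<exists>cs. is_cycle V E cs"
  shows "3 \<le> girth V E" "girth_exceeds V E (girth V E - 1)"
proof -
  have "\<exists>cs. is_cycle V E cs \<and> length cs = girth V E"
    unfolding girth_def by (rule LeastI_ex) (use assms in blast)
  then show "3 \<le> girth V E" by (auto simp: is_cycle_def)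
  show "girth_exceeds V E (girth V E - 1)"
    unfolding girth_exceeds_def
  proof (intro allI impI)
    fix cs assume "is_cycle V E cs"
    then have "girth V E \<le> length cs" unfolding girth_def by (intro Least_le) blast
    with \<open>3 \<le> girth V E\<close> show "girth V E - 1 < length cs" by linarith
  qed
qed

lemma three_mult_power2_ge: "3 \<le> R \<Longrightarrow> 8 * R \<le> 3 * (2::nat) ^ R + 2"
  by (induction R rule: nat_induct_at_least) simp_all

lemma power2_ge: "3 \<le> R \<Longrightarrow> 8 * R + 2 \<le> (2::nat) ^ (R + 2)"
  by (induction R rule: nat_induct_at_least) simp_all

context min_degree_3_graph
begin

lemma moore_bound_girth:
  assumes "V \<noteq> {}"
  shows "girth V E = 2 * R + 1 \<Longrightarrow> 3 * 2 ^ R \<le> card V + 2"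
    and "girth V E = 2 * R + 2 \<Longrightarrow> 2 ^ (R + 2) \<le> card V + 2"
proof -
  have girth: "girth_exceeds V E (girth V E - 1)"
    using girth_exceeds_girth has_cycle[OF assms] by blast
  obtain x where x: "x \<in> V" using assms by blast
  then obtain y where "y \<in> neighbours V E x"
    using card_neighbours_ge_3[OF x] by (metis card.empty ex_in_conv not_numeral_le_zero)
  then have xy: "{x, y} \<in> E" by (simp add: neighbours_def)
  show "girth V E = 2 * R + 1 \<Longrightarrow> 3 * 2 ^ R \<le> card V + 2"
    using moore_bound_odd[OF x, of R] girth by simp
  show "girth V E = 2 * R + 2 \<Longrightarrow> 2 ^ (R + 2) \<le> card V + 2"
    using moore_bound_even[OF xy, of R] girth by simp
qed

text \<open>Since every vertex has degree at least 3, the genus is at least card V / 2 + 1; the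
  Moore bounds then leave room for a girth above the claimed bound only when equality holds
  throughout, that is, for cubic graphs of girth 4, 5 or 6 on 6, 10 or 14 vertices.\<close>
lemma large_girth_cases:
  assumes "V \<noteq> {}" "4 \<le> genus V E" "(genus V E + 3) div 2 < int (girth V E)"
  shows "2 * card E = 3 * card V \<and>
    (card V = 6 \<and> girth_exceeds V E 3 \<or> card V = 10 \<and> girth_exceeds V E 4 \<or>
     card V = 14 \<and> girth_exceeds V E 5)"
proof -
  let ?k = "girth V E" and ?g = "genus V E"
  have "3 \<le> ?k" and girth: "girth_exceeds V E (?k - 1)"
    using girth_exceeds_girth has_cycle[OF assms(1)] by blast+
  have g: "?g = 1 - int (card V) + int (card E)" by (simp add: genus_def)
  have ve: "3 * card V \<le> 2 * card E" by (rule three_card_V_le)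
  have gk: "?g \<le> 2 * int ?k - 4" using assms(3) by presburger
  note moore = moore_bound_girth[OF assms(1)]
  define R where "R = (?k - 1) div 2"
  have "1 \<le> R" and k: "?k = 2 * R + 1 \<or> ?k = 2 * R + 2"
    using \<open>3 \<le> ?k\<close> unfolding R_def by presburger+
  consider "?k = 3" | "?k = 4" | "?k = 5" | "?k = 6" | "3 \<le> R"
    using k \<open>1 \<le> R\<close> by linarith
  then show ?thesis
  proof cases
    case 1
    then show ?thesis using gk assms(2) by simp
  next
    case 2
    then have "8 \<le> card V + 2" using moore(2)[of 1] by simp
    then have "card V = 6" "2 * card E = 3 * card V" using 2 gk assms(2) ve g by linarith+
    then show ?thesis using 2 girth by simp
  next
    case 3
    then have "12 \<le> card V + 2" using moore(1)[of 2] by simp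
    then have "card V = 10" "2 * card E = 3 * card V" using 3 gk ve g by linarith+
    then show ?thesis using 3 girth by simp
  next
    case 4
    then have "16 \<le> card V + 2" using moore(2)[of 2] by simp
    then have "card V = 14" "2 * card E = 3 * card V" using 4 gk ve g by linarith+
    then show ?thesis using 4 girth by simp
  next
    case 5
    from k have False
    proof
      assume "?k = 2 * R + 1"
      moreover from this have "3 * 2 ^ R \<le> card V + 2" by (rule moore(1))
      ultimately show False using three_mult_power2_ge[OF 5] gk ve g by linarith
    next
      assume "?k = 2 * R + 2"
      moreover from this have "2 ^ (R + 2) \<le> card V + 2" by (rule moore(2))
      ultimately show False using power2_ge[OF 5] gk ve g by linarith
    qed
    then show ?thesis ..
  qed
qed

end

definition cubic_moore_graphs :: "(nat set \<times> nat set set) list" where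
  "cubic_moore_graphs =
     map (\<lambda>al. ({0..<length al}, adj_list_edges al)) [K33_adj, petersen_adj, heawood_adj]"

theorem mainTheorem10:
  "\<exists>exc :: (nat set \<times> nat set set) list. length exc \<le> 3 \<and>
     (\<forall>(V :: nat set) (E :: nat set set).
        simple_graph V E \<and> two_connected V E \<and> genus V E \<ge> 4 \<and>
        (\<forall>u\<in>V. degree V E u \<ge> 3)
        \<longrightarrow> int (girth V E) \<le> (genus V E + 3) div 2
            \<or> (\<exists>H \<in> set exc. graph_iso V E (fst H) (snd H)))"
proof (intro exI[of _ cubic_moore_graphs] conjI allI impI)
  fix V :: "nat set" and E
  assume hyps: "simple_graph V E \<and> two_connected V E \<and> genus V E \<ge> 4 \<and> (\<forall>u\<in>V. degree V E u \<ge> 3)"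
  then have deg: "min_degree_3_graph V E" by (simp add: min_degree_3_graph_def)
  from hyps have "V \<noteq> {}" by (simp add: two_connected_def connected_graph_def)
  show "int (girth V E) \<le> (genus V E + 3) div 2 \<or>
    (\<exists>H \<in> set cubic_moore_graphs. graph_iso V E (fst H) (snd H))"
  proof (cases "int (girth V E) \<le> (genus V E + 3) div 2")
    case False
    then have "2 * card E = 3 * card V" and moore: "card V = 6 \<and> girth_exceeds V E 3 \<or>
        card V = 10 \<and> girth_exceeds V E 4 \<or> card V = 14 \<and> girth_exceeds V E 5"
      using min_degree_3_graph.large_girth_cases[OF deg \<open>V \<noteq> {}\<close>] hyps by auto
    then have cubic: "cubic_girth_graph V E L" if "girth_exceeds V E L" for L
      using min_degree_3_graph.cubic_if_card_E[OF deg] deg that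
      by (simp add: cubic_girth_graph_def cubic_girth_graph_axioms_def)
    from moore consider "card V = 6" "girth_exceeds V E 3" | "card V = 10" "girth_exceeds V E 4"
      | "card V = 14" "girth_exceeds V E 5"
      by blast
    then have "\<exists>H \<in> set cubic_moore_graphs. graph_iso V E (fst H) (snd H)"
      unfolding cubic_moore_graphs_def
      by cases (use graph_iso_K33[OF cubic] graph_iso_petersen[OF cubic]
          graph_iso_heawood[OF cubic] in simp_all)
    then show ?thesis ..
  qed simp
qed (simp add: cubic_moore_graphs_def)

end
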